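(* Let $A$ be a synaptic algebra and $p,q\in P$. Let $r:=(p\vee q)\wedge(p\vee q^{\perp})\wedge(p^{\perp}\vee q)\wedge(p^{\perp}\vee q^{\perp})$, $r_p:=p\wedge(p^{\perp}\vee q)\wedge(p^{\perp}\vee q^{\perp})$, $r_{p^{\perp}}:=p^{\perp}\wedge(p\vee q)\wedge(p\vee q^{\perp})$, $r_q:=q\wedge(p\vee q^{\perp})\wedge(p^{\perp}\vee q^{\perp})$, $r_{q^{\perp}}:=q^{\perp}\wedge(p\vee q)\wedge(p^{\perp}\vee q)$, $c:=(pqp+p^{\perp}q^{\perp}p^{\perp})^{1/2}$, $s:=(pq^{\perp}p+p^{\perp}qp^{\perp})^{1/2}$, and $c_r:=(r_pr_qr_p+r_{p^{\perp}}r_{q^{\perp}}r_{p^{\perp}})^{1/2}$, $s_r:=(r_pr_{q^{\perp}}r_p+r_{p^{\perp}}r_qr_{p^{\perp}})^{1/2}$. Then: (i) $c_r=cr=rc$ and $s_r=sr=rs$; (ii) $c=c_r+|(p\wedge q)-(p^{\perp}\wedge q^{\perp})|$ and $s=s_r+|(p\wedge q^{\perp})-(p^{\perp}\wedge q)|$.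
   Context: Synaptic algebra (Foulis): $R$ is a real linear associative algebra with unit $1$, and $A\subseteq R$ is a real linear subspace with $1\in A$. For $a,b\in A$ write $aCb$ iff $ab=ba$; $C(a):=\{b\in A: aCb\}$; $CC(a):=\{b\in A: bCd \text{ for all } d\in C(a)\}$. $A$ is a synaptic algebra with enveloping algebra $R$ iff: (SA1) $A$ is a partially ordered archimedean real linear space with positive cone $A^+$, $1$ is an order unit, $\|\cdot\|$ the order-unit norm; (SA2) $a\in A\Rightarrow a^2\in A^+$; (SA3) $a,b\in A^+\Rightarrow aba\in A^+$; (SA4) if $a\in A$, $b\in A^+$, $aba=0$ then $ab=ba=0$; (SA5) if $a\in A^+$ there is $b\in A^+\cap CC(a)$ with $b^2=a$; (SA6) for $a\in A$ there is $p=p^2\in A$ with $ab=0\Leftrightarrow pb=0$ for all $b\in A$; (SA7) if $1\le a$ there is $b\in A$ with $ab=ba=1$; (SA8) if $a,b\in A$, $a_1\le a_2\le\cdots$ are pairwise commuting elements of $C(b)$ with $\|a-a_n\|\to0$, then $a\in C(b)$. $A$ is nondegenerate. Products are computed in $R$. $P:=\{p\in A:p=p^2\}$ with the inherited order is an orthomodular lattice with $p^{\perp}:=1-p$, meet $\wedge$, join $\vee$. For $0\le a$, $a^{1/2}$ is its unique positive square root in $A$; $|a|:=(a^2)^{1/2}$. *)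

theory Defs
  imports Complex_Main
begin

text \<open>The enveloping algebra R is the type 'a of class
real_algebra_1 (real, associative, unital; nondegenerate since 0 \<noteq> 1).
A is a subset of R, Pos is the positive cone A^+, and a \<le> b means b - a \<in> Pos.\<close>

definition sa_le :: "'a::real_algebra_1 set \<Rightarrow> 'a \<Rightarrow> 'a \<Rightarrow> bool" where
  "sa_le Pos a b \<longleftrightarrow> b - a \<in> Pos"

definition commutes :: "'a::real_algebra_1 \<Rightarrow> 'a \<Rightarrow> bool" where
  "commutes a b \<longleftrightarrow> a * b = b * a"

definition commutant :: "'a::real_algebra_1 set \<Rightarrow> 'a \<Rightarrow> 'a set" where
  "commutant A a = {b \<in> A. commutes a b}"

definition bicommutant :: "'a::real_algebra_1 set \<Rightarrow> 'a \<Rightarrow> 'a set" where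
  "bicommutant A a = {b \<in> A. \<forall>d \<in> commutant A a. commutes b d}"

definition ou_norm :: "'a::real_algebra_1 set \<Rightarrow> 'a \<Rightarrow> real" where
  "ou_norm Pos a = Inf {l. 0 \<le> l \<and> sa_le Pos (- (l *\<^sub>R 1)) a \<and> sa_le Pos a (l *\<^sub>R 1)}"

definition projs :: "'a::real_algebra_1 set \<Rightarrow> 'a set" where
  "projs A = {p \<in> A. p * p = p}"

definition synaptic_algebra :: "'a::real_algebra_1 set \<Rightarrow> 'a set \<Rightarrow> bool" where
  "synaptic_algebra A Pos \<longleftrightarrow>
    \<comment> \<open>A is a real linear subspace of R containing 1\<close>
    0 \<in> A \<and> 1 \<in> A \<and> (\<forall>a\<in>A. \<forall>b\<in>A. a + b \<in> A) \<and> (\<forall>t. \<forall>a\<in>A. t *\<^sub>R a \<in> A) \<and>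
    \<comment> \<open>SA1: partially ordered (positive cone), archimedean, 1 order unit\<close>
    Pos \<subseteq> A \<and> (\<forall>a\<in>Pos. \<forall>b\<in>Pos. a + b \<in> Pos) \<and>
    (\<forall>t\<ge>0. \<forall>a\<in>Pos. t *\<^sub>R a \<in> Pos) \<and> (\<forall>a. a \<in> Pos \<and> - a \<in> Pos \<longrightarrow> a = 0) \<and>
    (\<forall>a\<in>A. \<forall>b\<in>A. (\<forall>n::nat. sa_le Pos (of_nat n *\<^sub>R a) b) \<longrightarrow> sa_le Pos a 0) \<and>
    (\<forall>a\<in>A. \<exists>n::nat. sa_le Pos a (of_nat n *\<^sub>R 1)) \<and>
    \<comment> \<open>SA2\<close>
    (\<forall>a\<in>A. a * a \<in> Pos) \<and>
    \<comment> \<open>SA3\<close>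
    (\<forall>a\<in>Pos. \<forall>b\<in>Pos. a * b * a \<in> Pos) \<and>
    \<comment> \<open>SA4\<close>
    (\<forall>a\<in>A. \<forall>b\<in>Pos. a * b * a = 0 \<longrightarrow> a * b = 0 \<and> b * a = 0) \<and>
    \<comment> \<open>SA5\<close>
    (\<forall>a\<in>Pos. \<exists>b\<in>Pos \<inter> bicommutant A a. b * b = a) \<and>
    \<comment> \<open>SA6\<close>
    (\<forall>a\<in>A. \<exists>p\<in>projs A. \<forall>b\<in>A. a * b = 0 \<longleftrightarrow> p * b = 0) \<and>
    \<comment> \<open>SA7\<close>
    (\<forall>a\<in>A. sa_le Pos 1 a \<longrightarrow> (\<exists>b\<in>A. a * b = 1 \<and> b * a = 1)) \<and>
    \<comment> \<open>SA8\<close>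
    (\<forall>a\<in>A. \<forall>b\<in>A. \<forall>s::nat \<Rightarrow> 'a.
       (\<forall>n. s n \<in> commutant A b) \<and> (\<forall>m n. commutes (s m) (s n)) \<and>
       (\<forall>n. sa_le Pos (s n) (s (Suc n))) \<and>
       (\<lambda>n. ou_norm Pos (a - s n)) \<longlonglongrightarrow> 0
       \<longrightarrow> a \<in> commutant A b)"

definition perp :: "'a::real_algebra_1 \<Rightarrow> 'a" where
  "perp p = 1 - p"

definition pmeet :: "'a::real_algebra_1 set \<Rightarrow> 'a set \<Rightarrow> 'a \<Rightarrow> 'a \<Rightarrow> 'a" where
  "pmeet A Pos p q = (THE r. r \<in> projs A \<and> sa_le Pos r p \<and> sa_le Pos r q \<and>
      (\<forall>s\<in>projs A. sa_le Pos s p \<and> sa_le Pos s q \<longrightarrow> sa_le Pos s r))"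

definition pjoin :: "'a::real_algebra_1 set \<Rightarrow> 'a set \<Rightarrow> 'a \<Rightarrow> 'a \<Rightarrow> 'a" where
  "pjoin A Pos p q = (THE r. r \<in> projs A \<and> sa_le Pos p r \<and> sa_le Pos q r \<and>
      (\<forall>s\<in>projs A. sa_le Pos p s \<and> sa_le Pos q s \<longrightarrow> sa_le Pos r s))"

definition sa_sqrt :: "'a::real_algebra_1 set \<Rightarrow> 'a \<Rightarrow> 'a" where
  "sa_sqrt Pos a = (THE b. b \<in> Pos \<and> b * b = a)"

definition sa_abs :: "'a::real_algebra_1 set \<Rightarrow> 'a \<Rightarrow> 'a" where
  "sa_abs Pos a = sa_sqrt Pos (a * a)"

end

theory Submission
  imports Defs
begin

text \<open>The four meets \<open>p \<and> q\<close>, \<open>p \<and> q\<^sup>\<bottom>\<close>, \<open>p\<^sup>\<bottom> \<and> q\<close>, \<open>p\<^sup>\<bottom> \<and> q\<^sup>\<bottom>\<close> are pairwise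
  orthogonal projections commuting with \<open>p\<close> and \<open>q\<close>, and each join in the statement is the
  complement of one of them. So all meets in the statement are meets of commuting projections,
  i.e. products: \<open>r = 1 - (sum of the four meets)\<close>, \<open>r\<^sub>p = p r\<close>, \<open>r\<^sub>q = q r\<close>, etc. Hence
  \<open>c\<^sub>r\<^sup>2 = (pqp + p\<^sup>\<bottom>q\<^sup>\<bottom>p\<^sup>\<bottom>) r = c\<^sup>2 r\<close>, and as \<open>r\<close> is a projection commuting with \<open>c\<^sup>2\<close>,
  uniqueness of positive square roots gives \<open>c\<^sub>r = c r = r c\<close>. Moreover \<open>c\<^sup>2\<close>, hence \<open>c\<close>, acts
  as the identity on \<open>p \<and> q\<close> and \<open>p\<^sup>\<bottom> \<and> q\<^sup>\<bottom>\<close> and as zero on the two other meets; splitting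
  \<open>c = c 1\<close> along \<open>1 = r + (sum of the four meets)\<close> yields \<open>c = c\<^sub>r + (p \<and> q) + (p\<^sup>\<bottom> \<and> q\<^sup>\<bottom>)\<close>,
  and the last sum is \<open>|(p \<and> q) - (p\<^sup>\<bottom> \<and> q\<^sup>\<bottom>)|\<close>. The same argument applies to \<open>s\<close>.\<close>

lemma mult_one_minus_eq_self_iff: "x * (1 - y) = x \<longleftrightarrow> x * y = (0::'a::ring_1)"
  by (simp add: right_diff_distrib)

lemma one_minus_mult_eq_self_iff: "(1 - y) * x = x \<longleftrightarrow> y * x = (0::'a::ring_1)"
  by (simp add: left_diff_distrib)

lemma mult_assoc_left_eq: "x * y = z \<Longrightarrow> x * (y * w) = z * (w::'a::semigroup_mult)"
  by (simp add: mult.assoc [symmetric])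

lemma mult_eq_zero_via: "x * z = x \<Longrightarrow> z * y = 0 \<Longrightarrow> x * y = (0::'a::ring)"
  by (metis mult.assoc mult_zero_right)

lemma sandwich_mult_commuting_idem:
  fixes g x y :: "'a::semigroup_mult"
  assumes "g * g = g" "x * g = g * x" "y * g = g * y"
  shows "(x * g) * (y * g) * (x * g) = x * y * x * g"
  by (metis assms mult.assoc)

text \<open>The part of the axioms SA1--SA6 that the argument needs.\<close>
locale synaptic =
  fixes A Pos :: "'a::real_algebra_1 set"
  assumes one_mem: "1 \<in> A"
    and add_mem: "a \<in> A \<Longrightarrow> b \<in> A \<Longrightarrow> a + b \<in> A"
    and scaleR_mem: "a \<in> A \<Longrightarrow> t *\<^sub>R a \<in> A"
    and pos_mem: "a \<in> Pos \<Longrightarrow> a \<in> A"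
    and pos_add: "a \<in> Pos \<Longrightarrow> b \<in> Pos \<Longrightarrow> a + b \<in> Pos"
    and pos_antisym: "a \<in> Pos \<Longrightarrow> - a \<in> Pos \<Longrightarrow> a = 0"
    and square_pos: "a \<in> A \<Longrightarrow> a * a \<in> Pos"
    and sandwich_pos: "a \<in> Pos \<Longrightarrow> b \<in> Pos \<Longrightarrow> a * b * a \<in> Pos"
    and sandwich_eq_zero: "a \<in> A \<Longrightarrow> b \<in> Pos \<Longrightarrow> a * b * a = 0 \<Longrightarrow> a * b = 0 \<and> b * a = 0"
    and sqrt_exists: "a \<in> Pos \<Longrightarrow> \<exists>b\<in>Pos \<inter> bicommutant A a. b * b = a"
    and annihilator_proj: "a \<in> A \<Longrightarrow> \<exists>p\<in>projs A. \<forall>b\<in>A. a * b = 0 \<longleftrightarrow> p * b = 0"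

lemma synaptic_algebra_imp_synaptic: "synaptic_algebra A Pos \<Longrightarrow> synaptic A Pos"
  unfolding synaptic_algebra_def by (elim conjE) (unfold_locales; auto)

context synaptic
begin

lemma diff_mem: "a \<in> A \<Longrightarrow> b \<in> A \<Longrightarrow> a - b \<in> A"
  using add_mem [of a "(- 1) *\<^sub>R b"] scaleR_mem [of b "- 1"] by simp

lemma one_pos: "1 \<in> Pos"
  using square_pos [OF one_mem] by simp

lemma zero_pos: "0 \<in> Pos"
  using square_pos [OF diff_mem [OF one_mem one_mem]] by simp

lemma square_eq_zero: "a \<in> A \<Longrightarrow> a * a = 0 \<Longrightarrow> a = 0"
  using sandwich_eq_zero [OF _ one_pos, of a] by simp

lemma pos_add_eq_zero: "a \<in> Pos \<Longrightarrow> b \<in> Pos \<Longrightarrow> a + b = 0 \<Longrightarrow> a = 0"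
  using pos_antisym [of a] by (metis add_eq_0_iff minus_minus)

text \<open>With \<open>x = b - d\<close> one has \<open>x (b + d) = 0\<close>; the positive elements \<open>x\<^sup>2 b\<close> and
  \<open>x\<^sup>2 d\<close> then sum to zero, so both vanish, and SA4 gives \<open>x b = x d = 0\<close>, i.e. \<open>x\<^sup>2 = 0\<close>.\<close>
lemma pos_square_root_unique:
  assumes b: "b \<in> Pos" "b * b = a" and d: "d \<in> Pos" "d \<in> bicommutant A a" "d * d = a"
  shows "b = d"
proof -
  have bA: "b \<in> A" and dA: "d \<in> A" using b d pos_mem by auto
  have "a * b = b * a" using b(2) by (metis mult.assoc)
  hence "b \<in> commutant A a" using bA unfolding commutant_def commutes_def by simp
  hence db: "d * b = b * d" using d(2) unfolding bicommutant_def commutes_def by auto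
  define x where "x = b - d"
  have xA: "x \<in> A" and xxA: "x * x \<in> A"
    unfolding x_def using diff_mem bA dA square_pos pos_mem by auto
  have xb: "x * b = b * x" and xd: "x * d = d * x"
    unfolding x_def using db by (simp_all add: algebra_simps)
  have xx_commute_root_pos: "x * x * e \<in> Pos" if e: "e \<in> Pos" "x * e = e * x" for e
  proof -
    obtain u where u: "u \<in> Pos" "u \<in> bicommutant A e" "u * u = e" using sqrt_exists [OF e(1)] by auto
    have "e * (x * x) = x * x * e" using e(2) by (metis mult.assoc)
    hence "x * x \<in> commutant A e" using xxA unfolding commutant_def commutes_def by simp
    hence "u * (x * x) = x * x * u" using u(2) unfolding bicommutant_def commutes_def by auto
    hence "u * (x * x) * u = x * x * e" using u(3) by (metis mult.assoc)
    thus ?thesis using sandwich_pos [OF u(1) square_pos [OF xA]] by simp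
  qed
  have "x * x * b + x * x * d = x * (x * (b + d))" by (simp add: algebra_simps)
  also have "x * (b + d) = 0" unfolding x_def using b(2) d(3) db by (simp add: algebra_simps)
  finally have sum: "x * x * b + x * x * d = 0" by simp
  hence "x * x * b = 0"
    using pos_add_eq_zero [OF xx_commute_root_pos [OF b(1) xb] xx_commute_root_pos [OF d(1) xd]] by simp
  hence "x * b * x = 0" using xb by (metis mult.assoc)
  hence xb0: "x * b = 0" using sandwich_eq_zero [OF xA b(1)] by auto
  have "x * x * d = 0" using sum \<open>x * x * b = 0\<close> by simp
  hence "x * d * x = 0" using xd by (metis mult.assoc)
  hence "x * d = 0" using sandwich_eq_zero [OF xA d(1)] by auto
  hence "x * x = 0" using xb0 unfolding x_def by (simp add: algebra_simps)
  hence "x = 0" using square_eq_zero xA by blast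
  thus ?thesis unfolding x_def by simp
qed

lemma sa_sqrt_eqI:
  assumes "b \<in> Pos" "b * b = a"
  shows "sa_sqrt Pos a = b"
proof -
  have "a \<in> Pos" using assms square_pos pos_mem by auto
  then obtain d where d: "d \<in> Pos" "d \<in> bicommutant A a" "d * d = a" using sqrt_exists by auto
  have "b = d" using pos_square_root_unique [OF assms d] .
  show ?thesis
    unfolding sa_sqrt_def
  proof (rule the_equality)
    show "b \<in> Pos \<and> b * b = a" using assms by simp
    show "y = b" if "y \<in> Pos \<and> y * y = a" for y
      using pos_square_root_unique [OF _ _ d] that \<open>b = d\<close> by blast
  qed
qed

lemma
  assumes "a \<in> Pos"
  shows sa_sqrt_pos: "sa_sqrt Pos a \<in> Pos"
    and sa_sqrt_square: "sa_sqrt Pos a * sa_sqrt Pos a = a"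
    and sa_sqrt_bicommutant: "sa_sqrt Pos a \<in> bicommutant A a"
proof -
  obtain d where "d \<in> Pos" "d \<in> bicommutant A a" "d * d = a" using sqrt_exists [OF assms] by auto
  moreover from this have "sa_sqrt Pos a = d" by (intro sa_sqrt_eqI)
  ultimately show "sa_sqrt Pos a \<in> Pos" "sa_sqrt Pos a * sa_sqrt Pos a = a"
    "sa_sqrt Pos a \<in> bicommutant A a" by simp_all
qed

lemma sa_sqrt_commute:
  assumes "a \<in> Pos" "x \<in> A" "x * a = a * x"
  shows "sa_sqrt Pos a * x = x * sa_sqrt Pos a"
  using assms sa_sqrt_bicommutant [OF assms(1)]
  unfolding bicommutant_def commutant_def commutes_def by auto

lemma sa_sqrt_zero: "sa_sqrt Pos 0 = 0"
  using sa_sqrt_eqI [OF zero_pos] by simp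

lemma projs_mem: "e \<in> projs A \<Longrightarrow> e \<in> A"
  and projs_idem: "e \<in> projs A \<Longrightarrow> e * e = e"
  unfolding projs_def by auto

lemma projs_pos: "e \<in> projs A \<Longrightarrow> e \<in> Pos"
  using square_pos projs_mem projs_idem by metis

lemma projs_one_minus: "e \<in> projs A \<Longrightarrow> 1 - e \<in> projs A"
  unfolding projs_def using diff_mem one_mem by (auto simp: algebra_simps)

lemma pos_mult_proj_eq_self_commute:
  assumes "x \<in> Pos" "e \<in> projs A" "x * e = x"
  shows "e * x = x"
proof -
  have "(1 - e) * x * (1 - e) = 0" using assms(3) by (simp add: algebra_simps)
  hence "(1 - e) * x = 0"
    using sandwich_eq_zero [OF projs_mem [OF projs_one_minus [OF assms(2)]] assms(1)] by blast
  thus ?thesis by (simp add: algebra_simps)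
qed

lemma sa_le_projs_iff:
  assumes x: "x \<in> projs A" and y: "y \<in> projs A"
  shows "sa_le Pos x y \<longleftrightarrow> x * y = x"
proof
  assume "sa_le Pos x y"
  hence "(1 - y) * (y - x) * (1 - y) \<in> Pos"
    unfolding sa_le_def using sandwich_pos projs_pos projs_one_minus y by blast
  moreover have "(1 - y) * (y - x) * (1 - y) = - ((1 - y) * x * (1 - y))"
    using projs_idem [OF y] by (simp add: algebra_simps)
  ultimately have "(1 - y) * x * (1 - y) = 0"
    using pos_antisym sandwich_pos projs_pos projs_one_minus x y by metis
  hence "x * (1 - y) = 0"
    using sandwich_eq_zero [OF projs_mem [OF projs_one_minus [OF y]] projs_pos [OF x]] by blast
  thus "x * y = x" by (simp add: algebra_simps)
next
  assume xy: "x * y = x"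
  have "y * x = x" using pos_mult_proj_eq_self_commute [OF projs_pos [OF x] y xy] .
  hence "(y - x) * (y - x) = y - x" using xy projs_idem x y by (simp add: algebra_simps)
  moreover have "(y - x) * (y - x) \<in> Pos" using square_pos diff_mem projs_mem x y by blast
  ultimately show "sa_le Pos x y" unfolding sa_le_def by simp
qed

lemma sa_le_antisym: "sa_le Pos x y \<Longrightarrow> sa_le Pos y x \<Longrightarrow> x = y"
  unfolding sa_le_def using pos_antisym [of "y - x"] by simp

lemma projs_orth_commute:
  assumes "e \<in> projs A" "f \<in> projs A" "e * f = 0"
  shows "f * e = 0"
proof -
  have "e * (1 - f) = e" using assms(3) by (simp add: mult_one_minus_eq_self_iff)
  hence "(1 - f) * e = e"
    by (rule pos_mult_proj_eq_self_commute [OF projs_pos [OF assms(1)] projs_one_minus [OF assms(2)]])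
  thus ?thesis by (simp add: one_minus_mult_eq_self_iff)
qed

lemma projs_add_orth:
  assumes e: "e \<in> projs A" and f: "f \<in> projs A" and ef: "e * f = 0"
  shows "e + f \<in> projs A"
proof -
  have "(e + f) * (e + f) = e * e + e * f + f * e + f * f" by (simp add: algebra_simps)
  also have "\<dots> = e + f" using projs_idem e f ef projs_orth_commute [OF assms] by simp
  finally show ?thesis using add_mem projs_mem e f unfolding projs_def by blast
qed

definition proj_glb :: "'a \<Rightarrow> 'a \<Rightarrow> 'a \<Rightarrow> bool" where
  "proj_glb m p q \<longleftrightarrow> m \<in> projs A \<and> sa_le Pos m p \<and> sa_le Pos m q \<and>
      (\<forall>s\<in>projs A. sa_le Pos s p \<and> sa_le Pos s q \<longrightarrow> sa_le Pos s m)"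

text \<open>The meet is \<open>1 - e\<close>, where \<open>e\<close> is the projection of SA6 for \<open>(1 - p) + (1 - q)\<close>:
  a projection lies below \<open>p\<close> and \<open>q\<close> iff \<open>(1 - p) + (1 - q)\<close> annihilates it.\<close>
lemma proj_glb_exists:
  assumes p: "p \<in> projs A" and q: "q \<in> projs A"
  shows "\<exists>m. proj_glb m p q"
proof -
  have p': "1 - p \<in> projs A" and q': "1 - q \<in> projs A" using projs_one_minus p q by auto
  have "(1 - p) + (1 - q) \<in> A" using add_mem projs_mem p' q' by auto
  then obtain e where e: "e \<in> projs A" and ann: "\<forall>b\<in>A. ((1 - p) + (1 - q)) * b = 0 \<longleftrightarrow> e * b = 0"
    using annihilator_proj by blast
  have e': "1 - e \<in> projs A" using projs_one_minus e by auto
  have "e * (1 - e) = 0" using projs_idem [OF e] by (simp add: algebra_simps)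
  hence "((1 - p) + (1 - q)) * (1 - e) = 0" using ann projs_mem [OF e'] by blast
  hence "(1 - e) * (1 - p) * (1 - e) + (1 - e) * (1 - q) * (1 - e) = 0"
    by (metis distrib_left distrib_right mult.assoc mult_zero_right)
  moreover have "(1 - e) * (1 - p) * (1 - e) \<in> Pos" "(1 - e) * (1 - q) * (1 - e) \<in> Pos"
    using sandwich_pos projs_pos e' p' q' by blast+
  ultimately have "(1 - e) * (1 - p) * (1 - e) = 0" "(1 - e) * (1 - q) * (1 - e) = 0"
    using pos_add_eq_zero add.commute by metis+
  hence "(1 - e) * (1 - p) = 0" "(1 - e) * (1 - q) = 0"
    using sandwich_eq_zero projs_mem projs_pos e' p' q' by blast+
  hence ep: "(1 - e) * p = 1 - e" and eq: "(1 - e) * q = 1 - e"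
    by (simp_all add: algebra_simps)
  have "proj_glb (1 - e) p q"
    unfolding proj_glb_def
  proof (intro conjI ballI impI)
    show "1 - e \<in> projs A" by fact
    show "sa_le Pos (1 - e) p" "sa_le Pos (1 - e) q"
      using sa_le_projs_iff e' p q ep eq by auto
  next
    fix s assume s: "s \<in> projs A" and "sa_le Pos s p \<and> sa_le Pos s q"
    hence "s * p = s" "s * q = s" using sa_le_projs_iff p q by auto
    hence "p * s = s" "q * s = s" using pos_mult_proj_eq_self_commute projs_pos s p q by auto
    hence "((1 - p) + (1 - q)) * s = 0" by (simp add: algebra_simps mult_2)
    hence "s * e * s = 0" using ann projs_mem [OF s] by (simp add: mult.assoc)
    hence "s * e = 0" using sandwich_eq_zero projs_mem projs_pos s e by blast
    thus "sa_le Pos s (1 - e)" using sa_le_projs_iff s e' by (simp add: algebra_simps)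
  qed
  thus ?thesis by blast
qed

lemma proj_glb_unique: "proj_glb m p q \<Longrightarrow> proj_glb m' p q \<Longrightarrow> m' = m"
  unfolding proj_glb_def using sa_le_antisym by blast

lemma proj_glb_pmeet:
  assumes "p \<in> projs A" "q \<in> projs A"
  shows "proj_glb (pmeet A Pos p q) p q"
proof -
  obtain m where m: "proj_glb m p q" using proj_glb_exists assms by blast
  have "pmeet A Pos p q = m"
    unfolding pmeet_def proj_glb_def [symmetric]
    using m proj_glb_unique [OF m] by (rule the_equality)
  thus ?thesis using m by simp
qed

lemma pmeet_eqI: "p \<in> projs A \<Longrightarrow> q \<in> projs A \<Longrightarrow> proj_glb m p q \<Longrightarrow> pmeet A Pos p q = m"
  using proj_glb_pmeet proj_glb_unique by blast

lemma pmeet_projs: "p \<in> projs A \<Longrightarrow> q \<in> projs A \<Longrightarrow> pmeet A Pos p q \<in> projs A"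
  using proj_glb_pmeet unfolding proj_glb_def by blast

lemma pmeet_absorb:
  assumes p: "p \<in> projs A" and q: "q \<in> projs A"
  shows "pmeet A Pos p q * p = pmeet A Pos p q" "p * pmeet A Pos p q = pmeet A Pos p q"
    "pmeet A Pos p q * q = pmeet A Pos p q" "q * pmeet A Pos p q = pmeet A Pos p q"
proof -
  let ?m = "pmeet A Pos p q"
  have m: "?m \<in> projs A" using pmeet_projs p q .
  show mp: "?m * p = ?m" and mq: "?m * q = ?m"
    using proj_glb_pmeet [OF p q] sa_le_projs_iff [OF m] p q unfolding proj_glb_def by auto
  show "p * ?m = ?m" "q * ?m = ?m"
    using pos_mult_proj_eq_self_commute [OF projs_pos [OF m]] p q mp mq by auto
qed

lemma pmeet_commuting:
  assumes f: "f \<in> projs A" and g: "g \<in> projs A" and fg: "f * g = g * f"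
  shows "pmeet A Pos f g = f * g"
proof (rule pmeet_eqI [OF f g])
  have "f * g = g * f * g" using fg projs_idem [OF g] by (metis mult.assoc)
  hence "f * g \<in> A" using sandwich_pos projs_pos f g pos_mem by metis
  moreover have "f * g * (f * g) = f * g" using fg projs_idem f g by (metis mult.assoc)
  ultimately have fgp: "f * g \<in> projs A" unfolding projs_def by simp
  show "proj_glb (f * g) f g"
    unfolding proj_glb_def
  proof (intro conjI ballI impI)
    show "f * g \<in> projs A" by fact
    show "sa_le Pos (f * g) f" "sa_le Pos (f * g) g"
      using sa_le_projs_iff [OF fgp] f g fg projs_idem by (metis mult.assoc)+
  next
    fix s assume s: "s \<in> projs A" and "sa_le Pos s f \<and> sa_le Pos s g"
    hence "s * (f * g) = s" using sa_le_projs_iff f g by (metis mult.assoc)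
    thus "sa_le Pos s (f * g)" using sa_le_projs_iff s fgp by auto
  qed
qed

lemma pjoin_eq_one_minus_pmeet:
  assumes p: "p \<in> projs A" and q: "q \<in> projs A"
  shows "pjoin A Pos p q = 1 - pmeet A Pos (1 - p) (1 - q)"
proof -
  let ?m = "pmeet A Pos (1 - p) (1 - q)"
  have m: "proj_glb ?m (1 - p) (1 - q)" using proj_glb_pmeet projs_one_minus p q by auto
  have flip: "sa_le Pos (1 - x) (1 - y) \<longleftrightarrow> sa_le Pos y x" for x y
    unfolding sa_le_def by (simp add: algebra_simps)
  have flip': "sa_le Pos x (1 - y) \<longleftrightarrow> sa_le Pos y (1 - x)" for x y
    unfolding sa_le_def by (simp add: algebra_simps)
  have lub: "1 - ?m \<in> projs A \<and> sa_le Pos p (1 - ?m) \<and> sa_le Pos q (1 - ?m) \<and>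
      (\<forall>s\<in>projs A. sa_le Pos p s \<and> sa_le Pos q s \<longrightarrow> sa_le Pos (1 - ?m) s)"
  proof (intro conjI ballI impI)
    show "1 - ?m \<in> projs A" "sa_le Pos p (1 - ?m)" "sa_le Pos q (1 - ?m)"
      using m projs_one_minus flip' unfolding proj_glb_def by auto
  next
    fix s assume s: "s \<in> projs A" "sa_le Pos p s \<and> sa_le Pos q s"
    hence "sa_le Pos (1 - s) ?m" using m projs_one_minus flip unfolding proj_glb_def by auto
    thus "sa_le Pos (1 - ?m) s" using flip [of ?m "1 - s"] by simp
  qed
  show ?thesis
    unfolding pjoin_def
  proof (rule the_equality)
    fix j assume "j \<in> projs A \<and> sa_le Pos p j \<and> sa_le Pos q j \<and>
      (\<forall>s\<in>projs A. sa_le Pos p s \<and> sa_le Pos q s \<longrightarrow> sa_le Pos j s)"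
    thus "j = 1 - ?m" using lub sa_le_antisym by blast
  qed (rule lub)
qed

lemma pmeet_one_minus_orth:
  assumes e: "e \<in> projs A" and f: "f \<in> projs A" and ef: "e * f = 0"
  shows "pmeet A Pos (1 - e) (1 - f) = 1 - (e + f)"
  using pmeet_commuting [OF projs_one_minus [OF e] projs_one_minus [OF f]] ef
    projs_orth_commute [OF assms]
  by (simp add: algebra_simps)

lemma pmeet_one_minus_orth_commuting:
  assumes x: "x \<in> projs A" and e: "e \<in> projs A" and f: "f \<in> projs A" and ef: "e * f = 0"
    and xe: "x * e = e * x" and xf: "x * f = f * x"
  shows "pmeet A Pos x (pmeet A Pos (1 - e) (1 - f)) = x * (1 - (e + f))"
  unfolding pmeet_one_minus_orth [OF e f ef]
  using pmeet_commuting [OF x projs_one_minus [OF projs_add_orth [OF e f ef]]] xe xf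
  by (simp add: algebra_simps)

lemma sa_sqrt_mult_proj:
  assumes x: "x \<in> Pos" and e: "e \<in> projs A" and xe: "x * e = e * x"
  shows "sa_sqrt Pos (x * e) = sa_sqrt Pos x * e"
proof (rule sa_sqrt_eqI)
  let ?y = "sa_sqrt Pos x"
  have ye: "?y * e = e * ?y" using sa_sqrt_commute [OF x projs_mem [OF e] xe [symmetric]] by simp
  have "?y * e = e * ?y * e" using ye projs_idem [OF e] by (metis mult.assoc)
  thus "?y * e \<in> Pos" using sandwich_pos [OF projs_pos [OF e] sa_sqrt_pos [OF x]] by simp
  show "?y * e * (?y * e) = x * e"
    using ye projs_idem [OF e] sa_sqrt_square [OF x] by (metis mult.assoc)
qed

lemma sa_sqrt_projs: "e \<in> projs A \<Longrightarrow> sa_sqrt Pos e = e"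
  using sa_sqrt_eqI projs_pos projs_idem by blast

lemma sa_sqrt_mult_proj_eq_self:
  assumes "x \<in> Pos" "e \<in> projs A" "x * e = e" "e * x = e"
  shows "sa_sqrt Pos x * e = e"
  using sa_sqrt_mult_proj [OF assms(1,2)] sa_sqrt_projs [OF assms(2)] assms(3,4) by simp

lemma sa_sqrt_mult_proj_eq_zero:
  assumes "x \<in> Pos" "e \<in> projs A" "x * e = 0" "e * x = 0"
  shows "sa_sqrt Pos x * e = 0"
  using sa_sqrt_mult_proj [OF assms(1,2)] sa_sqrt_zero assms(3,4) by simp

lemma sa_abs_diff_orth:
  assumes e: "e \<in> projs A" and f: "f \<in> projs A" and ef: "e * f = 0"
  shows "sa_abs Pos (e - f) = e + f"
proof -
  have "(e - f) * (e - f) = e * e - e * f - f * e + f * f" by (simp add: algebra_simps)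
  also have "\<dots> = e + f" using projs_idem e f ef projs_orth_commute [OF assms] by simp
  finally show ?thesis
    unfolding sa_abs_def using sa_sqrt_projs [OF projs_add_orth [OF assms]] by simp
qed

end

locale projection_pair = synaptic +
  fixes p q :: 'a
  assumes p_projs: "p \<in> projs A" and q_projs: "q \<in> projs A"
begin

text \<open>In \<open>e\<^sub>i\<^sub>j\<close> the index \<open>i\<close> (resp. \<open>j\<close>) is \<open>1\<close> for \<open>p\<close> (resp. \<open>q\<close>) and \<open>0\<close> for its complement.\<close>
abbreviation e11 :: 'a where "e11 \<equiv> pmeet A Pos p q"
abbreviation e10 :: 'a where "e10 \<equiv> pmeet A Pos p (1 - q)"
abbreviation e01 :: 'a where "e01 \<equiv> pmeet A Pos (1 - p) q"
abbreviation e00 :: 'a where "e00 \<equiv> pmeet A Pos (1 - p) (1 - q)"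

lemma meets_projs: "e11 \<in> projs A" "e10 \<in> projs A" "e01 \<in> projs A" "e00 \<in> projs A"
  using pmeet_projs projs_one_minus p_projs q_projs by auto

lemma meets_mult_p:
  "e11 * p = e11" "p * e11 = e11" "e10 * p = e10" "p * e10 = e10"
  "e01 * p = 0" "p * e01 = 0" "e00 * p = 0" "p * e00 = 0"
  and meets_mult_q:
  "e11 * q = e11" "q * e11 = e11" "e10 * q = 0" "q * e10 = 0"
  "e01 * q = e01" "q * e01 = e01" "e00 * q = 0" "q * e00 = 0"
  using pmeet_absorb [OF p_projs q_projs] pmeet_absorb [OF p_projs projs_one_minus [OF q_projs]]
    pmeet_absorb [OF projs_one_minus [OF p_projs] q_projs]
    pmeet_absorb [OF projs_one_minus [OF p_projs] projs_one_minus [OF q_projs]]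
  by (simp_all add: mult_one_minus_eq_self_iff one_minus_mult_eq_self_iff)

lemma meets_orth:
  "e11 * e10 = 0" "e11 * e01 = 0" "e11 * e00 = 0" "e10 * e01 = 0" "e10 * e00 = 0" "e01 * e00 = 0"
  by (metis mult_eq_zero_via meets_mult_p meets_mult_q)+

lemma meets_orth':
  "e10 * e11 = 0" "e01 * e11 = 0" "e00 * e11 = 0" "e01 * e10 = 0" "e00 * e10 = 0" "e00 * e01 = 0"
  using projs_orth_commute meets_projs meets_orth by blast+

text \<open>The right-associated copies let \<open>simp\<close> evaluate products after \<open>algebra_simps\<close>
  has reassociated them to the right.\<close>
lemmas meets_simps = meets_mult_p meets_mult_q meets_orth meets_orth'
  meets_mult_p [THEN mult_assoc_left_eq] meets_mult_q [THEN mult_assoc_left_eq]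
  meets_orth [THEN mult_assoc_left_eq] meets_orth' [THEN mult_assoc_left_eq]
  meets_projs [THEN projs_idem] meets_projs [THEN projs_idem, THEN mult_assoc_left_eq]
  p_projs [THEN projs_idem] q_projs [THEN projs_idem]
  p_projs [THEN projs_idem, THEN mult_assoc_left_eq] q_projs [THEN projs_idem, THEN mult_assoc_left_eq]

definition generic :: 'a where
  "generic = 1 - (e11 + e10 + e01 + e00)"

lemma generic_projs: "generic \<in> projs A"
proof -
  have "e11 + e10 \<in> projs A" using projs_add_orth meets_projs meets_simps by blast
  moreover have "(e11 + e10) * e01 = 0" by (simp add: distrib_right meets_simps)
  ultimately have "e11 + e10 + e01 \<in> projs A" using projs_add_orth meets_projs by blast
  moreover have "(e11 + e10 + e01) * e00 = 0" by (simp add: distrib_right meets_simps)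
  ultimately show ?thesis
    unfolding generic_def using projs_add_orth projs_one_minus meets_projs by blast
qed

lemma commute_generic:
  assumes "x * e11 = e11 * x" "x * e10 = e10 * x" "x * e01 = e01 * x" "x * e00 = e00 * x"
  shows "x * generic = generic * x"
  using assms unfolding generic_def by (simp add: algebra_simps)

lemma p_commute_generic: "p * generic = generic * p"
  and q_commute_generic: "q * generic = generic * q"
  by (rule commute_generic; simp add: meets_simps)+

lemma pjoins_eq:
  "pjoin A Pos p q = 1 - e00" "pjoin A Pos p (1 - q) = 1 - e01"
  "pjoin A Pos (1 - p) q = 1 - e10" "pjoin A Pos (1 - p) (1 - q) = 1 - e11"
  using pjoin_eq_one_minus_pmeet projs_one_minus p_projs q_projs by simp_all

lemma pmeet_pjoins_eq_generic:
  "pmeet A Pos (pjoin A Pos p q)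
     (pmeet A Pos (pjoin A Pos p (1 - q))
       (pmeet A Pos (pjoin A Pos (1 - p) q) (pjoin A Pos (1 - p) (1 - q)))) = generic"
proof -
  have "pmeet A Pos (1 - e10) (1 - e11) = 1 - (e10 + e11)"
    using pmeet_one_minus_orth meets_projs meets_simps by blast
  moreover have "pmeet A Pos (1 - e01) (1 - (e10 + e11)) = 1 - (e01 + (e10 + e11))"
    using pmeet_one_minus_orth projs_add_orth meets_projs meets_simps
    by (simp add: distrib_left)
  moreover have "pmeet A Pos (1 - e00) (1 - (e01 + (e10 + e11))) = 1 - (e00 + (e01 + (e10 + e11)))"
    using pmeet_one_minus_orth projs_add_orth meets_projs meets_simps
    by (simp add: distrib_left)
  ultimately show ?thesis
    unfolding pjoins_eq generic_def by (simp add: ac_simps)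
qed

lemma pmeets_eq_mult_generic:
  "pmeet A Pos p (pmeet A Pos (pjoin A Pos (1 - p) q) (pjoin A Pos (1 - p) (1 - q))) = p * generic"
  "pmeet A Pos q (pmeet A Pos (pjoin A Pos p (1 - q)) (pjoin A Pos (1 - p) (1 - q))) = q * generic"
  "pmeet A Pos (1 - p) (pmeet A Pos (pjoin A Pos p q) (pjoin A Pos p (1 - q))) = (1 - p) * generic"
  "pmeet A Pos (1 - q) (pmeet A Pos (pjoin A Pos p q) (pjoin A Pos (1 - p) q)) = (1 - q) * generic"
  unfolding pjoins_eq generic_def
  by (subst pmeet_one_minus_orth_commuting;
      simp add: p_projs q_projs projs_one_minus meets_projs meets_simps algebra_simps)+

definition cos_sq :: 'a where
  "cos_sq = p * q * p + (1 - p) * (1 - q) * (1 - p)"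

definition sin_sq :: 'a where
  "sin_sq = p * (1 - q) * p + (1 - p) * q * (1 - p)"

lemma cos_sq_pos: "cos_sq \<in> Pos" and sin_sq_pos: "sin_sq \<in> Pos"
  unfolding cos_sq_def sin_sq_def
  using pos_add sandwich_pos projs_pos projs_one_minus p_projs q_projs by meson+

lemma cos_sq_mult_meets:
  "cos_sq * e11 = e11" "e11 * cos_sq = e11" "cos_sq * e00 = e00" "e00 * cos_sq = e00"
  "cos_sq * e10 = 0" "e10 * cos_sq = 0" "cos_sq * e01 = 0" "e01 * cos_sq = 0"
  unfolding cos_sq_def by (simp_all add: algebra_simps meets_simps)

lemma sin_sq_mult_meets:
  "sin_sq * e10 = e10" "e10 * sin_sq = e10" "sin_sq * e01 = e01" "e01 * sin_sq = e01"
  "sin_sq * e11 = 0" "e11 * sin_sq = 0" "sin_sq * e00 = 0" "e00 * sin_sq = 0"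
  unfolding sin_sq_def by (simp_all add: algebra_simps meets_simps)

lemma cos_sq_commute_generic: "cos_sq * generic = generic * cos_sq"
  and sin_sq_commute_generic: "sin_sq * generic = generic * sin_sq"
  by (rule commute_generic; simp add: cos_sq_mult_meets sin_sq_mult_meets)+

lemma cos_sq_mult_generic:
  "(p * generic) * (q * generic) * (p * generic)
     + ((1 - p) * generic) * ((1 - q) * generic) * ((1 - p) * generic) = cos_sq * generic"
  and sin_sq_mult_generic:
  "(p * generic) * ((1 - q) * generic) * (p * generic)
     + ((1 - p) * generic) * (q * generic) * ((1 - p) * generic) = sin_sq * generic"
proof -
  have "(1 - p) * generic = generic * (1 - p)" "(1 - q) * generic = generic * (1 - q)"
    using p_commute_generic q_commute_generic by (simp_all add: algebra_simps)
  thus "(p * generic) * (q * generic) * (p * generic)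
     + ((1 - p) * generic) * ((1 - q) * generic) * ((1 - p) * generic) = cos_sq * generic"
    "(p * generic) * ((1 - q) * generic) * (p * generic)
     + ((1 - p) * generic) * (q * generic) * ((1 - p) * generic) = sin_sq * generic"
    unfolding cos_sq_def sin_sq_def
    using sandwich_mult_commuting_idem [OF projs_idem [OF generic_projs]]
      p_commute_generic q_commute_generic
    by (simp_all add: distrib_right)
qed

lemma sqrt_cos_sq_eq: "sa_sqrt Pos cos_sq = sa_sqrt Pos cos_sq * generic + (e11 + e00)"
proof -
  let ?c = "sa_sqrt Pos cos_sq"
  have "?c = ?c * (generic + e11 + e10 + e01 + e00)" by (simp add: generic_def)
  also have "\<dots> = ?c * generic + ?c * e11 + ?c * e10 + ?c * e01 + ?c * e00"
    by (simp add: distrib_left)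
  also have "\<dots> = ?c * generic + (e11 + e00)"
    using sa_sqrt_mult_proj_eq_self [OF cos_sq_pos] sa_sqrt_mult_proj_eq_zero [OF cos_sq_pos]
      meets_projs cos_sq_mult_meets by simp
  finally show ?thesis .
qed

lemma sqrt_sin_sq_eq: "sa_sqrt Pos sin_sq = sa_sqrt Pos sin_sq * generic + (e10 + e01)"
proof -
  let ?s = "sa_sqrt Pos sin_sq"
  have "?s = ?s * (generic + e11 + e10 + e01 + e00)" by (simp add: generic_def)
  also have "\<dots> = ?s * generic + ?s * e11 + ?s * e10 + ?s * e01 + ?s * e00"
    by (simp add: distrib_left)
  also have "\<dots> = ?s * generic + (e10 + e01)"
    using sa_sqrt_mult_proj_eq_self [OF sin_sq_pos] sa_sqrt_mult_proj_eq_zero [OF sin_sq_pos]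
      meets_projs sin_sq_mult_meets by simp
  finally show ?thesis .
qed

end

theorem theorem6p7:
  fixes A Pos :: "'a::real_algebra_1 set" and p q :: 'a
  assumes SA: "synaptic_algebra A Pos"
    and p: "p \<in> projs A" and q: "q \<in> projs A"
  defines "r \<equiv> pmeet A Pos (pjoin A Pos p q)
                 (pmeet A Pos (pjoin A Pos p (perp q))
                   (pmeet A Pos (pjoin A Pos (perp p) q) (pjoin A Pos (perp p) (perp q))))"
    and "c \<equiv> sa_sqrt Pos (p * q * p + perp p * perp q * perp p)"
    and "s \<equiv> sa_sqrt Pos (p * perp q * p + perp p * q * perp p)"
    and "cr \<equiv> sa_sqrt Pos ((pmeet A Pos p (pmeet A Pos (pjoin A Pos (perp p) q) (pjoin A Pos (perp p) (perp q)))) * (pmeet A Pos q (pmeet A Pos (pjoin A Pos p (perp q)) (pjoin A Pos (perp p) (perp q)))) * (pmeet A Pos p (pmeet A Pos (pjoin A Pos (perp p) q) (pjoin A Pos (perp p) (perp q))))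
                 + (pmeet A Pos (perp p) (pmeet A Pos (pjoin A Pos p q) (pjoin A Pos p (perp q)))) * (pmeet A Pos (perp q) (pmeet A Pos (pjoin A Pos p q) (pjoin A Pos (perp p) q))) * (pmeet A Pos (perp p) (pmeet A Pos (pjoin A Pos p q) (pjoin A Pos p (perp q)))))"
    and "sr \<equiv> sa_sqrt Pos ((pmeet A Pos p (pmeet A Pos (pjoin A Pos (perp p) q) (pjoin A Pos (perp p) (perp q)))) * (pmeet A Pos (perp q) (pmeet A Pos (pjoin A Pos p q) (pjoin A Pos (perp p) q))) * (pmeet A Pos p (pmeet A Pos (pjoin A Pos (perp p) q) (pjoin A Pos (perp p) (perp q))))
                 + (pmeet A Pos (perp p) (pmeet A Pos (pjoin A Pos p q) (pjoin A Pos p (perp q)))) * (pmeet A Pos q (pmeet A Pos (pjoin A Pos p (perp q)) (pjoin A Pos (perp p) (perp q)))) * (pmeet A Pos (perp p) (pmeet A Pos (pjoin A Pos p q) (pjoin A Pos p (perp q)))))"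
  shows "(cr = c * r \<and> c * r = r * c \<and> sr = s * r \<and> s * r = r * s) \<and>
         (c = cr + sa_abs Pos (pmeet A Pos p q - pmeet A Pos (perp p) (perp q)) \<and>
          s = sr + sa_abs Pos (pmeet A Pos p (perp q) - pmeet A Pos (perp p) q))"
proof -
  interpret projection_pair A Pos p q
    by (rule projection_pair.intro [OF synaptic_algebra_imp_synaptic [OF SA]]) (unfold_locales; fact)
  have r: "r = generic"
    unfolding r_def perp_def by (rule pmeet_pjoins_eq_generic)
  have cr: "cr = sa_sqrt Pos cos_sq * generic"
    unfolding cr_def perp_def pmeets_eq_mult_generic cos_sq_mult_generic
    by (rule sa_sqrt_mult_proj [OF cos_sq_pos generic_projs cos_sq_commute_generic])
  have sr: "sr = sa_sqrt Pos sin_sq * generic"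
    unfolding sr_def perp_def pmeets_eq_mult_generic sin_sq_mult_generic
    by (rule sa_sqrt_mult_proj [OF sin_sq_pos generic_projs sin_sq_commute_generic])
  have "sa_sqrt Pos cos_sq * generic = generic * sa_sqrt Pos cos_sq"
    "sa_sqrt Pos sin_sq * generic = generic * sa_sqrt Pos sin_sq"
    using sa_sqrt_commute projs_mem [OF generic_projs] cos_sq_pos sin_sq_pos
      cos_sq_commute_generic sin_sq_commute_generic by simp_all
  moreover have "sa_abs Pos (e11 - e00) = e11 + e00" "sa_abs Pos (e10 - e01) = e10 + e01"
    using sa_abs_diff_orth meets_projs meets_orth by simp_all
  ultimately show ?thesis
    unfolding r cr sr c_def s_def perp_def cos_sq_def [symmetric] sin_sq_def [symmetric]
    using sqrt_cos_sq_eq sqrt_sin_sq_eq by simp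
qed

end
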